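(* Assume (A1) and let $S(x,t)=\inf_{v\in\mathbb{R}^n}\{J(x-tv)+tH^*(v)\}$ for $x\in\mathbb{R}^n$, $t>0$. Let $v^{(0)}\in\mathrm{int}\,\mathrm{dom}\,H^*$ and $d\in\mathrm{dom}\,J$. Then $$\lim_{t\to+\infty}\frac{S(d+tv^{(0)},t)}{t}=H^*(v^{(0)}).$$ If moreover $0\in\mathrm{dom}\,J$ and, for $t>0$, $F(x,t)=\inf_{v\in\mathrm{int}\,\mathrm{dom}\,H^*}\{tD_{H^*}(x/t,v)+J^*(\nabla H^*(v))\}$, then $$\lim_{t\to+\infty}\frac{F(tv^{(0)},t)}{t}=0.$$
   Context: $\Gamma_0(\mathbb{R}^n)$ denotes the set of proper, convex, lower semicontinuous functions $\mathbb{R}^n\to\mathbb{R}\cup\{+\infty\}$; $f^*$ is the Legendre–Fenchel transform. A function $g$ is 1-coercive if $g(x)/\|x\|\to+\infty$ as $\|x\|\to\infty$. A function $f\in\Gamma_0(\mathbb{R}^n)$ is Legendre if: $\mathrm{int}\,\mathrm{dom}\,f\neq\emptyset$; $f$ is differentiable on $\mathrm{int}\,\mathrm{dom}\,f$; $\partial f(x)=\emptyset$ for $x\in\mathrm{dom}\,f\setminus\mathrm{int}\,\mathrm{dom}\,f$ and $\partial f(x)=\{\nabla f(x)\}$ on $\mathrm{int}\,\mathrm{dom}\,f$; and $f$ is strictly convex on $\mathrm{int}\,\mathrm{dom}\,f$. $D_f(x,u)=f(x)-f(u)-\langle\nabla f(u),x-u\rangle$. Assumption (A1): $J,H\in\Gamma_0(\mathbb{R}^n)$,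 $J$ is 1-coercive, and $H$ is a Legendre function. *)

theory Defs
  imports "HOL-Analysis.Analysis" "HOL-Library.Extended_Real"
begin

definition edom :: "('a \<Rightarrow> ereal) \<Rightarrow> 'a set" where
  "edom f = {x. f x < \<infinity>}"

definition proper_fun :: "('a \<Rightarrow> ereal) \<Rightarrow> bool" where
  "proper_fun f \<longleftrightarrow> (\<forall>x. f x \<noteq> -\<infinity>) \<and> (\<exists>x. f x \<noteq> \<infinity>)"

text \<open>Convexity of an extended-valued function (proper case): convex domain and
  convexity of the (real) restriction to the domain, i.e. convex epigraph.\<close>
definition econvex :: "('a::real_vector \<Rightarrow> ereal) \<Rightarrow> bool" where
  "econvex f \<longleftrightarrow> convex (edom f) \<and> convex_on (edom f) (\<lambda>x. real_of_ereal (f x))"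

definition lsc :: "('a::topological_space \<Rightarrow> ereal) \<Rightarrow> bool" where
  "lsc f \<longleftrightarrow> (\<forall>x. f x \<le> Liminf (at x) f)"

definition Gamma0 :: "('a::real_normed_vector \<Rightarrow> ereal) set" where
  "Gamma0 = {f. proper_fun f \<and> econvex f \<and> lsc f}"

definition fconj :: "('a::real_inner \<Rightarrow> ereal) \<Rightarrow> 'a \<Rightarrow> ereal" where
  "fconj f y = (SUP x. ereal (inner x y) - f x)"

definition one_coercive :: "('a::real_normed_vector \<Rightarrow> ereal) \<Rightarrow> bool" where
  "one_coercive g \<longleftrightarrow> filterlim (\<lambda>x. g x / ereal (norm x)) at_top at_infinity"

definition subdiff :: "('a::real_inner \<Rightarrow> ereal) \<Rightarrow> 'a \<Rightarrow> 'a set" where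
  "subdiff f x = {g. f x < \<infinity> \<and> (\<forall>y. f x + ereal (inner g (y - x)) \<le> f y)}"

definition grad :: "('a::real_inner \<Rightarrow> ereal) \<Rightarrow> 'a \<Rightarrow> 'a" where
  "grad f x = (SOME g. ((\<lambda>y. real_of_ereal (f y)) has_derivative (\<lambda>h. inner g h)) (at x))"

definition edifferentiable_at :: "('a::real_normed_vector \<Rightarrow> ereal) \<Rightarrow> 'a \<Rightarrow> bool" where
  "edifferentiable_at f x \<longleftrightarrow> (\<lambda>y. real_of_ereal (f y)) differentiable (at x)"

definition strictly_convex_on :: "'a::real_vector set \<Rightarrow> ('a \<Rightarrow> ereal) \<Rightarrow> bool" where
  "strictly_convex_on S f \<longleftrightarrow> (\<forall>x\<in>S. \<forall>y\<in>S. \<forall>u::real. x \<noteq> y \<and> 0 < u \<and> u < 1 \<longrightarrow>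
      f (u *\<^sub>R x + (1 - u) *\<^sub>R y) < ereal u * f x + ereal (1 - u) * f y)"

definition legendre :: "('a::real_inner \<Rightarrow> ereal) \<Rightarrow> bool" where
  "legendre f \<longleftrightarrow> f \<in> Gamma0
     \<and> interior (edom f) \<noteq> {}
     \<and> (\<forall>x\<in>interior (edom f). edifferentiable_at f x)
     \<and> (\<forall>x\<in>edom f - interior (edom f). subdiff f x = {})
     \<and> (\<forall>x\<in>interior (edom f). subdiff f x = {grad f x})
     \<and> strictly_convex_on (interior (edom f)) f"

definition bregman :: "('a::real_inner \<Rightarrow> ereal) \<Rightarrow> 'a \<Rightarrow> 'a \<Rightarrow> ereal" where
  "bregman f x u = f x - f u - ereal (inner (grad f u) (x - u))"

definition hopf_lax :: "('a::real_inner \<Rightarrow> ereal) \<Rightarrow> ('a \<Rightarrow> ereal) \<Rightarrow> 'a \<Rightarrow> real \<Rightarrow> ereal" where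
  "hopf_lax J H x t = (INF v. J (x - t *\<^sub>R v) + ereal t * fconj H v)"

definition bregman_repr :: "('a::real_inner \<Rightarrow> ereal) \<Rightarrow> ('a \<Rightarrow> ereal) \<Rightarrow> 'a \<Rightarrow> real \<Rightarrow> ereal" where
  "bregman_repr J H x t = (INF v \<in> interior (edom (fconj H)).
      ereal t * bregman (fconj H) ((1 / t) *\<^sub>R x) v + fconj J (grad (fconj H) v))"

end

theory Submission
  imports Defs
begin

text \<open>
  Upper bounds come from evaluating both infima at v = v0: S(d + t v0, t) <= J(d) + t H*(v0), and
  F(t v0, t) <= J*(grad H*(v0)), which is finite because J is 1-coercive. For the lower bound on S,
  Fenchel-Young applied to J and to H* gives S(x, t) >= <p, x> - J*(p) - t H(p) for every p, and a
  p nearly attaining the supremum that defines H*(v0) gives slope at least H*(v0) - e. For F we use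
  J* >= -J(0) and the nonnegativity of the Bregman distance of H*. The latter needs grad H*(v) to be
  a subgradient of H*, i.e. H* must be differentiable in the interior of its domain: there the
  supremum defining H*(v) is attained (H is lsc and H - <., w> is uniformly coercive for w near v),
  the maximiser is unique by strict convexity of the Legendre function H, and near-maximisers at w
  converge to it as w -> v, which makes it the gradient of H* at v.
\<close>

section \<open>The Legendre-Fenchel conjugate\<close>

lemma fconj_ge: "ereal (inner x y) - f x \<le> fconj f y"
  unfolding fconj_def by (rule SUP_upper) simp

lemma fconj_ge_real: "f x = ereal a \<Longrightarrow> ereal (inner x y - a) \<le> fconj f y"
  using fconj_ge[of x y f] by simp

lemma fenchel_young: "fconj f y = ereal c \<Longrightarrow> f x = ereal a \<Longrightarrow> inner x y - a \<le> c"
  using fconj_ge_real[of f x a y] by simp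

lemma fconj_affine_minorant:
  assumes "fconj f y = ereal c"
  shows "ereal (inner x y - c) \<le> f x"
proof (cases "f x")
  case (real a)
  then show ?thesis using fenchel_young[OF assms real] by simp
next
  case MInf
  then show ?thesis using fconj_ge[of x y f] assms by simp
qed simp

lemma fconj_le:
  assumes "\<And>x a. f x = ereal a \<Longrightarrow> inner x y - a \<le> c" "\<And>x. f x \<noteq> -\<infinity>"
  shows "fconj f y \<le> ereal c"
  unfolding fconj_def
proof (rule SUP_least)
  fix x
  show "ereal (inner x y) - f x \<le> ereal c"
    using assms[of x] by (cases "f x") auto
qed

lemma fconj_almost_attained:
  assumes "fconj f y = ereal c" "e > 0"
  obtains x a where "f x = ereal a" "c - e < inner x y - a"
proof -
  have "ereal (c - e) < fconj f y" using assms by simp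
  then obtain x where x: "ereal (c - e) < ereal (inner x y) - f x"
    unfolding fconj_def less_SUP_iff by blast
  moreover have "f x \<noteq> -\<infinity>" using fconj_ge[of x y f] assms(1) by auto
  ultimately obtain a where "f x = ereal a" by (cases "f x") auto
  with x show ?thesis using that by simp
qed

lemma Gamma0_not_MInf: "f \<in> Gamma0 \<Longrightarrow> f x \<noteq> -\<infinity>"
  unfolding Gamma0_def proper_fun_def by blast

lemma Gamma0_lsc: "f \<in> Gamma0 \<Longrightarrow> lsc f"
  unfolding Gamma0_def by blast

lemma Gamma0_finite_point:
  assumes "f \<in> Gamma0"
  obtains x a where "f x = ereal a"
proof -
  obtain x where "f x \<noteq> \<infinity>" using assms unfolding Gamma0_def proper_fun_def by blast
  with Gamma0_not_MInf[OF assms, of x] that show ?thesis by (cases "f x") auto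
qed

lemma Gamma0_edom_real:
  assumes "f \<in> Gamma0" "x \<in> edom f"
  obtains a where "f x = ereal a"
  using assms Gamma0_not_MInf[OF assms(1), of x] unfolding edom_def by (cases "f x") auto

lemma fconj_not_MInf:
  assumes "f \<in> Gamma0"
  shows "fconj f y \<noteq> -\<infinity>"
proof -
  obtain x a where "f x = ereal a" by (rule Gamma0_finite_point[OF assms])
  from fconj_ge_real[of f x a y, OF this] show ?thesis by auto
qed

lemma fconj_edom_real:
  assumes "f \<in> Gamma0" "y \<in> edom (fconj f)"
  shows "fconj f y = ereal (real_of_ereal (fconj f y))"
  using assms fconj_not_MInf[OF assms(1), of y] unfolding edom_def by (cases "fconj f y") auto

section \<open>Lower semicontinuity and coercivity\<close>

lemma lsc_eventually_greater:
  fixes f :: "'a::metric_space \<Rightarrow> ereal"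
  assumes "lsc f" "X \<longlonglongrightarrow> x" "c < f x"
  shows "eventually (\<lambda>k. c < f (X k)) sequentially"
proof -
  have "eventually (\<lambda>y. c < f y) (at x)"
    using assms(1,3) le_Liminf_iff unfolding lsc_def by blast
  then obtain d where d: "d > 0" "\<And>y. y \<noteq> x \<Longrightarrow> dist y x < d \<Longrightarrow> c < f y"
    unfolding eventually_at by blast
  have "eventually (\<lambda>k. dist (X k) x < d) sequentially"
    using assms(2) d(1) by (rule tendstoD)
  then show ?thesis
    by eventually_elim (metis assms(3) d(2))
qed

lemma lsc_le_limit:
  fixes f :: "'a::metric_space \<Rightarrow> ereal"
  assumes "lsc f" "X \<longlonglongrightarrow> x" "\<And>k. f (X k) \<le> ereal (b k)" "b \<longlonglongrightarrow> L"
  shows "f x \<le> ereal L"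
proof (rule ccontr)
  assume "\<not> f x \<le> ereal L"
  then obtain c where c: "L < c" "ereal c < f x"
    using ereal_dense2 not_le by (metis ereal_less(2) less_ereal.simps(1))
  have "eventually (\<lambda>k. ereal c < f (X k)) sequentially"
    using lsc_eventually_greater[OF assms(1,2) c(2)] .
  moreover have "eventually (\<lambda>k. b k < c) sequentially"
    using assms(4) c(1) order_tendstoD(2) by blast
  ultimately have "eventually (\<lambda>k. False) sequentially"
    by eventually_elim (use assms(3) in \<open>meson ereal_less_eq(3) less_le_not_le order_less_le_trans\<close>)
  then show False by simp
qed

lemma lsc_bounded_below_on_compact:
  fixes f :: "'a::metric_space \<Rightarrow> ereal"
  assumes "lsc f" "\<And>x. f x \<noteq> -\<infinity>" "compact K"
  obtains C where "\<And>x. x \<in> K \<Longrightarrow> ereal C \<le> f x"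
proof (rule ccontr)
  assume "\<not> thesis"
  then have "\<forall>k::nat. \<exists>x\<in>K. f x < ereal (- real k)" using that by (meson not_le)
  then obtain X where X: "\<And>k. X k \<in> K" "\<And>k. f (X k) < ereal (- real k)" by metis
  obtain l r where lr: "l \<in> K" "strict_mono r" "(X \<circ> r) \<longlonglongrightarrow> l"
    using compact_imp_seq_compact[OF assms(3)] X(1) by (metis seq_compactE)
  obtain c where c: "ereal c < f l"
    using assms(2)[of l] by (cases "f l") (auto, meson lt_ex)
  have "eventually (\<lambda>k. ereal c < f (X (r k))) sequentially"
    using lsc_eventually_greater[OF assms(1) lr(3) c] by simp
  moreover have "eventually (\<lambda>k. - real k < c) sequentially"
  proof -
    obtain N :: nat where "- c < real N" using reals_Archimedean2 by blast
    then show ?thesis unfolding eventually_sequentially by (intro exI[of _ N]) auto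
  qed
  ultimately have "eventually (\<lambda>k. False) sequentially"
  proof eventually_elim
    case (elim k)
    have "f (X (r k)) < ereal (- real k)"
      using X(2)[of "r k"] seq_suble[OF lr(2), of k] by (simp add: order_less_le_trans)
    with elim(1) have "ereal c < ereal (- real k)" by (rule less_trans)
    with elim(2) show False by simp
  qed
  then show False by simp
qed

lemma one_coercive_linear_minorant:
  fixes J :: "'a::euclidean_space \<Rightarrow> ereal"
  assumes "J \<in> Gamma0" "one_coercive J" "M \<ge> 0"
  obtains K where "\<And>y. ereal (M * norm y - K) \<le> J y"
proof -
  have "eventually (\<lambda>y. ereal M \<le> J y / ereal (norm y)) at_infinity"
    using assms(2) unfolding one_coercive_def filterlim_at_top by blast
  then obtain R where R: "\<And>y. R \<le> norm y \<Longrightarrow> ereal M \<le> J y / ereal (norm y)"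
    unfolding eventually_at_infinity by blast
  define R' where "R' = max R 1"
  have far: "ereal (M * norm y) \<le> J y" if "R' \<le> norm y" for y
  proof -
    have "norm y > 0" "ereal M \<le> J y / ereal (norm y)" using that R[of y] unfolding R'_def by auto
    then show ?thesis by (simp add: ereal_le_divide_pos mult.commute)
  qed
  obtain C where near: "\<And>y. y \<in> cball 0 R' \<Longrightarrow> ereal C \<le> J y"
    using lsc_bounded_below_on_compact[OF Gamma0_lsc[OF assms(1)] Gamma0_not_MInf[OF assms(1)]
        compact_cball] by blast
  have "ereal (M * norm y - max 0 (M * R' - C)) \<le> J y" for y
  proof (cases "R' \<le> norm y")
    case True
    have "ereal (M * norm y - max 0 (M * R' - C)) \<le> ereal (M * norm y)" by simp
    also have "\<dots> \<le> J y" using far True .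
    finally show ?thesis .
  next
    case False
    then have "M * norm y \<le> M * R'" using assms(3) by (simp add: mult_left_mono)
    then have "ereal (M * norm y - max 0 (M * R' - C)) \<le> ereal C" by simp
    also have "\<dots> \<le> J y" using near[of y] False by simp
    finally show ?thesis .
  qed
  then show ?thesis using that by blast
qed

lemma fconj_finite_if_one_coercive:
  fixes J :: "'a::euclidean_space \<Rightarrow> ereal"
  assumes "J \<in> Gamma0" "one_coercive J"
  shows "fconj J p = ereal (real_of_ereal (fconj J p))"
proof -
  obtain K where K: "\<And>y. ereal (norm p * norm y - K) \<le> J y"
    using one_coercive_linear_minorant[OF assms norm_ge_zero[of p]] by blast
  have "fconj J p \<le> ereal K"
  proof (rule fconj_le)
    fix x a assume "J x = ereal a"
    then show "inner x p - a \<le> K"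
      using K[of x] norm_cauchy_schwarz[of x p] by (simp add: mult.commute)
  qed (rule Gamma0_not_MInf[OF assms(1)])
  then show ?thesis using fconj_not_MInf[OF assms(1), of p] by (cases "fconj J p") auto
qed

section \<open>The Hopf-Lax formula\<close>

lemma tendsto_ereal_slope_at_top:
  fixes g :: "real \<Rightarrow> ereal"
  assumes lower: "\<And>e. e > 0 \<Longrightarrow> \<exists>C. \<forall>t>0. ereal (t * (c - e) + C) \<le> g t"
    and upper: "\<exists>C. \<forall>t>0. g t \<le> ereal (t * c + C)"
  shows "((\<lambda>t. g t / ereal t) \<longlongrightarrow> ereal c) at_top"
proof -
  have affine_slope: "((\<lambda>t. ereal ((t * s + C) / t)) \<longlongrightarrow> ereal s) at_top" for s C
  proof -
    have "((\<lambda>t. s + C / t) \<longlongrightarrow> s + 0) at_top"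
      by (intro tendsto_add tendsto_const real_tendsto_divide_at_top[OF tendsto_const filterlim_ident])
    moreover have "eventually (\<lambda>t. s + C / t = (t * s + C) / t) at_top"
      using eventually_gt_at_top[of 0] by eventually_elim (simp add: field_simps)
    ultimately show ?thesis by (simp add: tendsto_cong)
  qed
  have divide: "ereal ((t * s + C) / t) \<le> g t / ereal t \<longleftrightarrow> ereal (t * s + C) \<le> g t"
    "g t / ereal t \<le> ereal ((t * s + C) / t) \<longleftrightarrow> g t \<le> ereal (t * s + C)" if "t > 0" for t s C
    using that by (simp_all add: ereal_le_divide_pos ereal_divide_le_pos)
  show ?thesis
  proof (rule order_tendstoI)
    fix a assume "a < ereal c"
    then obtain r where r: "a < ereal r" "r < c" using ereal_dense2 by force
    obtain C where C: "\<forall>t>0. ereal (t * r + C) \<le> g t" using lower[of "c - r"] r(2) by auto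
    show "eventually (\<lambda>t. a < g t / ereal t) at_top"
      using order_tendstoD(1)[OF affine_slope r(1)] eventually_gt_at_top[of 0]
      by eventually_elim (use C divide in \<open>blast intro: less_le_trans\<close>)
  next
    fix b assume "ereal c < b"
    obtain C where C: "\<forall>t>0. g t \<le> ereal (t * c + C)" using upper by blast
    show "eventually (\<lambda>t. g t / ereal t < b) at_top"
      using order_tendstoD(2)[OF affine_slope \<open>ereal c < b\<close>] eventually_gt_at_top[of 0]
      by eventually_elim (use C divide in \<open>blast intro: le_less_trans\<close>)
  qed
qed

lemma hopf_lax_le: "hopf_lax J H x t \<le> J (x - t *\<^sub>R v) + ereal t * fconj H v"
  unfolding hopf_lax_def by (rule INF_lower) simp

lemma hopf_lax_ge_dual:
  assumes "fconj J p = ereal a" "H p = ereal b" "t \<ge> 0"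
  shows "ereal (inner p x - a - t * b) \<le> hopf_lax J H x t"
  unfolding hopf_lax_def
proof (rule INF_greatest)
  fix v
  have "ereal (inner (x - t *\<^sub>R v) p - a) \<le> J (x - t *\<^sub>R v)"
    by (rule fconj_affine_minorant[OF assms(1)])
  moreover have "ereal t * ereal (inner p v - b) \<le> ereal t * fconj H v"
    using fconj_ge_real[of H p b v, OF assms(2)] assms(3) by (intro ereal_mult_left_mono) auto
  ultimately have "ereal (inner (x - t *\<^sub>R v) p - a) + ereal t * ereal (inner p v - b)
      \<le> J (x - t *\<^sub>R v) + ereal t * fconj H v"
    by (rule add_mono)
  then show "ereal (inner p x - a - t * b) \<le> J (x - t *\<^sub>R v) + ereal t * fconj H v"
    by (simp add: inner_diff_left inner_commute algebra_simps)
qed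

lemma hopf_lax_slope:
  fixes J H :: "'a::euclidean_space \<Rightarrow> ereal"
  assumes J: "J \<in> Gamma0" "one_coercive J" and H: "H \<in> Gamma0"
    and v0: "v0 \<in> edom (fconj H)" and d: "d \<in> edom J"
  shows "((\<lambda>t. hopf_lax J H (d + t *\<^sub>R v0) t / ereal t) \<longlongrightarrow> fconj H v0) at_top"
proof -
  define c where "c = real_of_ereal (fconj H v0)"
  have c: "fconj H v0 = ereal c" using fconj_edom_real[OF H v0] c_def by simp
  obtain j where j: "J d = ereal j" using Gamma0_edom_real[OF J(1) d] .
  have "((\<lambda>t. hopf_lax J H (d + t *\<^sub>R v0) t / ereal t) \<longlongrightarrow> ereal c) at_top"
  proof (rule tendsto_ereal_slope_at_top)
    fix e :: real assume "e > 0"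
    then obtain p b where p: "H p = ereal b" "c - e < inner p v0 - b"
      using fconj_almost_attained[OF c] by blast
    define a where "a = real_of_ereal (fconj J p)"
    have a: "fconj J p = ereal a" using fconj_finite_if_one_coercive[OF J] a_def by simp
    have "ereal (t * (c - e) + (inner p d - a)) \<le> hopf_lax J H (d + t *\<^sub>R v0) t" if "t > 0" for t
    proof -
      have "t * (c - e) \<le> t * (inner p v0 - b)" using p(2) that by simp
      then have "ereal (t * (c - e) + (inner p d - a)) \<le> ereal (inner p (d + t *\<^sub>R v0) - a - t * b)"
        by (simp add: inner_add_right algebra_simps)
      also have "\<dots> \<le> hopf_lax J H (d + t *\<^sub>R v0) t"
        using hopf_lax_ge_dual[of J p a H b, OF a p(1)] that by simp
      finally show ?thesis .
    qed
    then show "\<exists>C. \<forall>t>0. ereal (t * (c - e) + C) \<le> hopf_lax J H (d + t *\<^sub>R v0) t" by blast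
  next
    have "hopf_lax J H (d + t *\<^sub>R v0) t \<le> ereal (t * c + j)" for t
      using hopf_lax_le[of J H "d + t *\<^sub>R v0" t v0] by (simp add: c j add.commute)
    then show "\<exists>C. \<forall>t>0. hopf_lax J H (d + t *\<^sub>R v0) t \<le> ereal (t * c + C)" by blast
  qed
  then show ?thesis using c by simp
qed

section \<open>Differentiability of the conjugate of a Legendre function\<close>

lemma grad_eqI:
  assumes "((\<lambda>y. real_of_ereal (f y)) has_derivative inner g) (at x)"
  shows "grad f x = g"
proof -
  have "((\<lambda>y. real_of_ereal (f y)) has_derivative inner (grad f x)) (at x)"
    unfolding grad_def by (rule someI[of _ g]) (rule assms)
  from has_derivative_unique[OF this assms] have "inner (grad f x) = inner g" .
  then have "inner (grad f x - g) (grad f x - g) = 0" by (simp add: inner_diff_left)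
  then show ?thesis by simp
qed

context
  fixes H :: "'a::euclidean_space \<Rightarrow> ereal"
  assumes H: "H \<in> Gamma0"
begin

text \<open>Since real_of_ereal maps \<infinity> to 0, \<phi> is only meaningful on edom (fconj H).\<close>
abbreviation \<phi> :: "'a \<Rightarrow> real" where "\<phi> w \<equiv> real_of_ereal (fconj H w)"

lemma fconj_convex_combination:
  assumes "fconj H a = ereal ca" "fconj H b = ereal cb" "0 \<le> u" "0 \<le> w" "u + w = 1"
  shows "fconj H (u *\<^sub>R a + w *\<^sub>R b) \<le> ereal (u * ca + w * cb)"
proof (rule fconj_le)
  fix x h assume hx: "H x = ereal h"
  have "u * h + w * h = h" using assms(5) by (metis distrib_right mult_1)
  then have "inner x (u *\<^sub>R a + w *\<^sub>R b) - h = u * (inner x a - h) + w * (inner x b - h)"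
    by (simp add: inner_add_right right_diff_distrib)
  also have "\<dots> \<le> u * ca + w * cb"
    using fenchel_young[OF assms(1) hx] fenchel_young[OF assms(2) hx] assms(3,4)
    by (intro add_mono mult_left_mono)
  finally show "inner x (u *\<^sub>R a + w *\<^sub>R b) - h \<le> u * ca + w * cb" .
qed (rule Gamma0_not_MInf[OF H])

lemma convex_edom_fconj: "convex (edom (fconj H))"
  unfolding convex_def
proof (intro ballI allI impI)
  fix a b and u w :: real assume ab: "a \<in> edom (fconj H)" "b \<in> edom (fconj H)"
    and uw: "0 \<le> u" "0 \<le> w" "u + w = 1"
  have "fconj H (u *\<^sub>R a + w *\<^sub>R b) \<le> ereal (u * \<phi> a + w * \<phi> b)"
    using fconj_convex_combination[OF fconj_edom_real[OF H ab(1)] fconj_edom_real[OF H ab(2)] uw] .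
  then show "u *\<^sub>R a + w *\<^sub>R b \<in> edom (fconj H)"
    unfolding edom_def using le_less_trans by fastforce
qed

lemma convex_on_fconj: "convex_on (edom (fconj H)) \<phi>"
  unfolding convex_on_def
proof (intro conjI ballI allI impI convex_edom_fconj)
  fix a b and u w :: real assume ab: "a \<in> edom (fconj H)" "b \<in> edom (fconj H)"
    and uw: "0 \<le> u" "0 \<le> w" "u + w = 1"
  have "u *\<^sub>R a + w *\<^sub>R b \<in> edom (fconj H)"
    using convex_edom_fconj ab uw unfolding convex_def by blast
  then have "ereal (\<phi> (u *\<^sub>R a + w *\<^sub>R b)) \<le> ereal (u * \<phi> a + w * \<phi> b)"
    using fconj_convex_combination[OF fconj_edom_real[OF H ab(1)] fconj_edom_real[OF H ab(2)] uw]
    by (simp flip: fconj_edom_real[OF H])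
  then show "\<phi> (u *\<^sub>R a + w *\<^sub>R b) \<le> u * \<phi> a + w * \<phi> b" by simp
qed

lemma continuous_on_fconj: "continuous_on (interior (edom (fconj H))) \<phi>"
  by (rule convex_on_continuous[OF open_interior convex_on_subset[OF convex_on_fconj interior_subset
        convex_interior[OF convex_edom_fconj]]])

lemma fconj_approx_maximizers_bounded:
  assumes v: "v \<in> interior (edom (fconj H))"
  obtains r B where "r > 0" "cball v r \<subseteq> interior (edom (fconj H))"
    "\<And>w x a. w \<in> cball v r \<Longrightarrow> H x = ereal a \<Longrightarrow> \<phi> w - 1 \<le> inner x w - a \<Longrightarrow>
      norm x \<le> B"
proof -
  let ?U = "interior (edom (fconj H))"
  obtain e where e: "e > 0" "cball v e \<subseteq> ?U"
    using v open_interior open_contains_cball by blast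
  define r where "r = e / 2"
  have r: "r > 0" "cball v (2 * r) \<subseteq> ?U" using e unfolding r_def by auto
  have "compact (\<phi> ` cball v (2 * r))"
    by (rule compact_continuous_image[OF continuous_on_subset[OF continuous_on_fconj r(2)]
          compact_cball])
  then obtain M where "\<forall>y\<in>\<phi> ` cball v (2 * r). norm y \<le> M"
    using compact_imp_bounded bounded_iff by blast
  then have M: "\<And>w. w \<in> cball v (2 * r) \<Longrightarrow> \<bar>\<phi> w\<bar> \<le> M" by simp
  have bound: "norm x \<le> (2 * M + 1) / r"
    if w: "w \<in> cball v r" and x: "H x = ereal a" "\<phi> w - 1 \<le> inner x w - a" for w x a
  proof -
    \<comment> \<open>Fenchel-Young at w' bounds r |x|; for x = 0 the junk division gives w' = w.\<close>
    define w' where "w' = w + (r / norm x) *\<^sub>R x"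
    have "norm (w - w') \<le> r" using r(1) by (cases "x = 0") (simp_all add: w'_def)
    then have w': "w' \<in> cball v (2 * r)" "w \<in> cball v (2 * r)"
      using w norm_diff_triangle_le[of v w r w' r] r(1) by (auto simp: dist_norm)
    have "inner x w' = inner x w + r * norm x"
      by (cases "x = 0") (simp_all add: w'_def inner_add_right power2_norm_eq_inner[symmetric]
          power2_eq_square)
    moreover have "inner x w' - a \<le> \<phi> w'"
      using fenchel_young[OF fconj_edom_real[OF H] x(1)] w' r(2) interior_subset by blast
    ultimately have "r * norm x \<le> 2 * M + 1" using x(2) M[OF w'(1)] M[OF w'(2)] by linarith
    then show ?thesis using r(1) by (simp add: field_simps)
  qed
  have "cball v r \<subseteq> ?U" using r subset_cball[of r "2 * r" v] by simp
  from that[OF r(1) this bound] show thesis .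
qed

lemma fconj_maximizer_of_limit:
  assumes v: "v \<in> interior (edom (fconj H))" and W: "W \<longlonglongrightarrow> v"
    and X: "\<And>k. H (X k) = ereal (A k)" "\<And>k. \<phi> (W k) - e k \<le> inner (X k) (W k) - A k"
    and e: "e \<longlonglongrightarrow> 0" and l: "X \<longlonglongrightarrow> l"
  shows "H l = ereal (inner l v - \<phi> v)"
proof (rule antisym)
  have "isCont \<phi> v"
    using continuous_on_fconj v continuous_on_eq_continuous_at[OF open_interior] by blast
  then have "(\<lambda>k. inner (X k) (W k) - \<phi> (W k) + e k) \<longlonglongrightarrow> inner l v - \<phi> v + 0"
    by (intro tendsto_intros l W e isCont_tendsto_compose[of v \<phi>])
  moreover have "H (X k) \<le> ereal (inner (X k) (W k) - \<phi> (W k) + e k)" for k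
    using X[of k] by simp
  ultimately show "H l \<le> ereal (inner l v - \<phi> v)"
    using lsc_le_limit[OF Gamma0_lsc[OF H] l] by fastforce
  show "ereal (inner l v - \<phi> v) \<le> H l"
    using fconj_affine_minorant[OF fconj_edom_real[OF H]] v interior_subset by blast
qed

lemma fconj_approx_maximizers_limit_point:
  assumes v: "v \<in> interior (edom (fconj H))" and W: "W \<longlonglongrightarrow> v"
    and X: "\<And>k. H (X k) = ereal (A k)" "\<And>k. \<phi> (W k) - e k \<le> inner (X k) (W k) - A k"
    and e: "e \<longlonglongrightarrow> 0" "\<And>k. e k \<le> 1"
  obtains s l where "strict_mono s" "(X \<circ> s) \<longlonglongrightarrow> l" "H l = ereal (inner l v - \<phi> v)"
proof -
  obtain r B where r: "r > 0" "cball v r \<subseteq> interior (edom (fconj H))"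
    and bounded: "\<And>w x a. w \<in> cball v r \<Longrightarrow> H x = ereal a \<Longrightarrow>
      \<phi> w - 1 \<le> inner x w - a \<Longrightarrow> norm x \<le> B"
    using fconj_approx_maximizers_bounded[OF v] by metis
  obtain N where N: "\<And>k. N \<le> k \<Longrightarrow> W k \<in> cball v r"
    using tendstoD[OF W r(1)] unfolding eventually_sequentially
    by (metis dist_commute less_imp_le mem_cball)
  have "norm (X (k + N)) \<le> B" for k
    using bounded[OF N[of "k + N"] X(1)] X(2)[of "k + N"] e(2)[of "k + N"] by simp
  then have "bounded (range (\<lambda>k. X (k + N)))" unfolding bounded_iff by blast
  then obtain l s' where s': "strict_mono s'" "((\<lambda>k. X (k + N)) \<circ> s') \<longlonglongrightarrow> l"
    using bounded_imp_convergent_subsequence by blast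
  define s where "s k = s' k + N" for k
  have s: "strict_mono s" "(X \<circ> s) \<longlonglongrightarrow> l"
    using s' unfolding s_def strict_mono_def by (auto simp: comp_def)
  have "H l = ereal (inner l v - \<phi> v)"
  proof (rule fconj_maximizer_of_limit[OF v _ _ _ _ s(2)])
    show "(W \<circ> s) \<longlonglongrightarrow> v" "(e \<circ> s) \<longlonglongrightarrow> 0"
      using LIMSEQ_subseq_LIMSEQ[OF W s(1)] LIMSEQ_subseq_LIMSEQ[OF e(1) s(1)] by simp_all
  qed (use X in auto)
  with s show thesis by (rule that)
qed

lemma fconj_maximizer_exists:
  assumes v: "v \<in> interior (edom (fconj H))"
  obtains x where "H x = ereal (inner x v - \<phi> v)"
proof -
  have fv: "fconj H v = ereal (\<phi> v)" using fconj_edom_real[OF H] v interior_subset by blast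
  have "\<forall>k. \<exists>x a. H x = ereal a \<and> \<phi> v - inverse (real (Suc k)) < inner x v - a"
  proof
    fix k
    show "\<exists>x a. H x = ereal a \<and> \<phi> v - inverse (real (Suc k)) < inner x v - a"
      by (rule fconj_almost_attained[OF fv, of "inverse (real (Suc k))"]) auto
  qed
  then obtain X A where X: "\<And>k. H (X k) = ereal (A k)"
      "\<And>k. \<phi> v - inverse (real (Suc k)) < inner (X k) v - A k"
    by metis
  obtain s l where "H l = ereal (inner l v - \<phi> v)"
  proof (rule fconj_approx_maximizers_limit_point[OF v tendsto_const X(1) _ LIMSEQ_inverse_real_of_nat])
    show "\<phi> v - inverse (real (Suc k)) \<le> inner (X k) v - A k" for k
      using X(2)[of k] by simp
  qed (simp_all add: inverse_le_1_iff)
  then show thesis by (rule that)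
qed

lemma fconj_maximizer_in_interior:
  assumes L: "legendre H" and v: "v \<in> edom (fconj H)" and x: "H x = ereal (inner x v - \<phi> v)"
  shows "x \<in> interior (edom H)"
proof -
  have "v \<in> subdiff H x"
    unfolding subdiff_def
  proof (intro CollectI conjI allI)
    show "H x < \<infinity>" using x by simp
    fix y
    have "ereal (inner y v - \<phi> v) \<le> H y"
      using fconj_affine_minorant[OF fconj_edom_real[OF H v]] .
    then show "H x + ereal (inner v (y - x)) \<le> H y"
      using x by (simp add: inner_diff_right inner_commute)
  qed
  moreover have "x \<in> edom H" using x unfolding edom_def by simp
  ultimately show ?thesis using L unfolding legendre_def by blast
qed

lemma fconj_maximizer_unique:
  assumes L: "legendre H" and v: "v \<in> edom (fconj H)"
    and x1: "H x1 = ereal (inner x1 v - \<phi> v)" and x2: "H x2 = ereal (inner x2 v - \<phi> v)"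
  shows "x1 = x2"
proof (rule ccontr)
  assume "x1 \<noteq> x2"
  define m where "m = (1/2) *\<^sub>R x1 + (1 - 1/2) *\<^sub>R x2"
  have "strictly_convex_on (interior (edom H)) H" using L unfolding legendre_def by blast
  then have "H m < ereal (1/2) * H x1 + ereal (1 - 1/2) * H x2"
    unfolding strictly_convex_on_def m_def
    using fconj_maximizer_in_interior[OF L v x1] fconj_maximizer_in_interior[OF L v x2] \<open>x1 \<noteq> x2\<close>
    by (metis field_sum_of_halves half_gt_zero_iff less_add_same_cancel1 zero_less_one)
  also have "\<dots> = ereal (inner m v - \<phi> v)"
    using x1 x2 unfolding m_def by (simp add: inner_add_left algebra_simps)
  also have "\<dots> \<le> H m" by (rule fconj_affine_minorant[OF fconj_edom_real[OF H v]])
  finally show False by simp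
qed

lemma fconj_maximizer_subgradient:
  assumes "y \<in> edom (fconj H)" "H x0 = ereal (inner x0 v - \<phi> v)"
  shows "\<phi> v + inner x0 (y - v) \<le> \<phi> y"
  using fenchel_young[OF fconj_edom_real[OF H assms(1)] assms(2)] by (simp add: inner_diff_right)

lemma fconj_approx_maximizers_converge:
  assumes L: "legendre H" and v: "v \<in> interior (edom (fconj H))"
    and x0: "H x0 = ereal (inner x0 v - \<phi> v)" and \<epsilon>: "\<epsilon> > 0"
  shows "\<exists>\<eta>>0. \<forall>w x a. norm (w - v) < \<eta> \<longrightarrow> H x = ereal a \<longrightarrow>
           \<phi> w - (norm (w - v))\<^sup>2 \<le> inner x w - a \<longrightarrow> norm (x - x0) < \<epsilon>"
proof (rule ccontr)
  assume "\<not> ?thesis"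
  then have "\<forall>k. \<exists>w x a. norm (w - v) < inverse (real (Suc k)) \<and> H x = ereal a \<and>
      \<phi> w - (norm (w - v))\<^sup>2 \<le> inner x w - a \<and> \<epsilon> \<le> norm (x - x0)"
    by (metis not_less inverse_positive_iff_positive of_nat_0_less_iff zero_less_Suc)
  then obtain W X A where W: "\<And>k. norm (W k - v) < inverse (real (Suc k))"
    and X: "\<And>k. H (X k) = ereal (A k)"
      "\<And>k. \<phi> (W k) - (norm (W k - v))\<^sup>2 \<le> inner (X k) (W k) - A k"
    and far: "\<And>k. \<epsilon> \<le> norm (X k - x0)"
    by metis
  have Wv: "W \<longlonglongrightarrow> v"
  proof (rule LIM_zero_cancel, rule Lim_null_comparison)
    show "eventually (\<lambda>k. norm (W k - v) \<le> inverse (real (Suc k))) sequentially"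
      using W by (simp add: less_imp_le)
  qed (rule LIMSEQ_inverse_real_of_nat)
  have e: "(\<lambda>k. (norm (W k - v))\<^sup>2) \<longlonglongrightarrow> 0"
    using tendsto_power[OF tendsto_norm[OF LIM_zero[OF Wv]], of 2] by simp
  have e1: "(norm (W k - v))\<^sup>2 \<le> 1" for k
    using W[of k] inverse_le_1_iff[of "real (Suc k)"] by (simp add: power_le_one)
  obtain s l where s: "(X \<circ> s) \<longlonglongrightarrow> l" and l: "H l = ereal (inner l v - \<phi> v)"
    using fconj_approx_maximizers_limit_point[OF v Wv X e e1] by metis
  have "l = x0" using fconj_maximizer_unique[OF L _ l x0] v interior_subset by blast
  with s have "(\<lambda>k. norm ((X \<circ> s) k - x0)) \<longlonglongrightarrow> 0"
    by (simp add: tendsto_norm_zero_iff LIM_zero comp_def)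
  moreover have "\<epsilon> \<le> norm ((X \<circ> s) k - x0)" for k using far by simp
  ultimately have "\<epsilon> \<le> 0" by (simp add: LIMSEQ_le_const)
  then show False using \<epsilon> by simp
qed

lemma fconj_remainder_quotient_le:
  assumes v: "v \<in> edom (fconj H)" and y: "y \<in> edom (fconj H)"
    and x0: "H x0 = ereal (inner x0 v - \<phi> v)"
    and x: "H x = ereal a" "\<phi> y - (norm (y - v))\<^sup>2 \<le> inner x y - a"
  shows "norm (\<phi> y - \<phi> v - inner x0 (y - v)) / norm (y - v) \<le> norm (x - x0) + norm (y - v)"
proof (cases "y = v")
  case False
  have lower: "0 \<le> \<phi> y - \<phi> v - inner x0 (y - v)"
    using fconj_maximizer_subgradient[OF y x0] by simp
  have "inner x v - a \<le> \<phi> v" using fenchel_young[OF fconj_edom_real[OF H v] x(1)] .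
  then have "\<phi> y - \<phi> v - inner x0 (y - v) \<le> inner (x - x0) (y - v) + (norm (y - v))\<^sup>2"
    using x(2) by (simp add: inner_diff_left inner_diff_right)
  also have "\<dots> \<le> (norm (x - x0) + norm (y - v)) * norm (y - v)"
    using norm_cauchy_schwarz[of "x - x0" "y - v"] by (simp add: algebra_simps power2_eq_square)
  finally show ?thesis using lower False by (simp add: divide_le_eq)
qed simp

lemma fconj_has_derivative:
  assumes L: "legendre H" and v: "v \<in> interior (edom (fconj H))"
    and x0: "H x0 = ereal (inner x0 v - \<phi> v)"
  shows "(\<phi> has_derivative inner x0) (at v)"
  unfolding has_derivative_iff_norm
proof (intro conjI bounded_linear_inner_right)
  show "((\<lambda>y. norm (\<phi> y - \<phi> v - inner x0 (y - v)) / norm (y - v)) \<longlongrightarrow> 0) (at v)"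
    unfolding tendsto_iff eventually_at
  proof (intro allI impI)
    fix e :: real assume e: "e > 0"
    obtain \<eta> where \<eta>: "\<eta> > 0" "\<And>w x a. norm (w - v) < \<eta> \<Longrightarrow> H x = ereal a \<Longrightarrow>
        \<phi> w - (norm (w - v))\<^sup>2 \<le> inner x w - a \<Longrightarrow> norm (x - x0) < e/2"
      using fconj_approx_maximizers_converge[OF L v x0, of "e/2"] e by auto
    obtain r where r: "r > 0" "ball v r \<subseteq> interior (edom (fconj H))"
      using v open_interior open_contains_ball by blast
    have "norm (\<phi> y - \<phi> v - inner x0 (y - v)) / norm (y - v) < e"
      if y: "y \<noteq> v" "dist y v < min \<eta> (min r (e/2))" for y
    proof -
      have "y \<in> ball v r" using y by (simp add: dist_commute)
      then have y_dom: "y \<in> edom (fconj H)" using r(2) interior_subset by blast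
      obtain x a where x: "H x = ereal a" "\<phi> y - (norm (y - v))\<^sup>2 < inner x y - a"
        using fconj_almost_attained[OF fconj_edom_real[OF H y_dom], of "(norm (y - v))\<^sup>2"] y(1)
        by auto
      have "norm (y - v) < \<eta>" using y(2) by (simp add: dist_norm)
      then have "norm (x - x0) < e/2" using \<eta>(2)[OF _ x(1) less_imp_le[OF x(2)]] by blast
      then show ?thesis
        using fconj_remainder_quotient_le[OF _ y_dom x0 x(1)] x(2) y(2) v interior_subset
        by (fastforce simp: dist_norm)
    qed
    then show "\<exists>d>0. \<forall>y\<in>UNIV. y \<noteq> v \<and> dist y v < d \<longrightarrow>
        dist (norm (\<phi> y - \<phi> v - inner x0 (y - v)) / norm (y - v)) 0 < e"
      using \<eta>(1) r(1) e by (intro exI[of _ "min \<eta> (min r (e/2))"]) auto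
  qed
qed

lemma grad_fconj_maximizer:
  assumes L: "legendre H" and v: "v \<in> interior (edom (fconj H))"
  shows "H (grad (fconj H) v) = ereal (inner (grad (fconj H) v) v - \<phi> v)"
proof -
  obtain x0 where x0: "H x0 = ereal (inner x0 v - \<phi> v)" using fconj_maximizer_exists[OF v] .
  with grad_eqI[OF fconj_has_derivative[OF L v x0]] show ?thesis by simp
qed

lemma bregman_fconj_nonneg:
  assumes L: "legendre H" and v: "v \<in> interior (edom (fconj H))" and y: "y \<in> edom (fconj H)"
  shows "0 \<le> bregman (fconj H) y v"
proof -
  have "\<phi> v + inner (grad (fconj H) v) (y - v) \<le> \<phi> y"
    by (rule fconj_maximizer_subgradient[OF y grad_fconj_maximizer[OF L v]])
  moreover have "v \<in> edom (fconj H)" using v interior_subset by blast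
  ultimately show ?thesis
    unfolding bregman_def
    by (subst fconj_edom_real[OF H y], subst fconj_edom_real[OF H \<open>v \<in> edom (fconj H)\<close>]) simp
qed

end

section \<open>The Bregman representation\<close>

lemma bregman_repr_slope:
  fixes J H :: "'a::euclidean_space \<Rightarrow> ereal"
  assumes J: "J \<in> Gamma0" "one_coercive J" "0 \<in> edom J" and H: "H \<in> Gamma0" "legendre H"
    and v0: "v0 \<in> interior (edom (fconj H))"
  shows "((\<lambda>t. bregman_repr J H (t *\<^sub>R v0) t / ereal t) \<longlongrightarrow> 0) at_top"
proof -
  obtain j0 where j0: "J 0 = ereal j0" using Gamma0_edom_real[OF J(1) J(3)] .
  define K where "K = real_of_ereal (fconj J (grad (fconj H) v0))"
  have v0': "v0 \<in> edom (fconj H)" using v0 interior_subset by blast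
  have scale: "(1 / t) *\<^sub>R (t *\<^sub>R v0) = v0" if "t > 0" for t using that by simp
  have "((\<lambda>t. bregman_repr J H (t *\<^sub>R v0) t / ereal t) \<longlongrightarrow> ereal 0) at_top"
  proof (rule tendsto_ereal_slope_at_top)
    fix e :: real assume "e > 0"
    have "ereal (- j0) \<le> bregman_repr J H (t *\<^sub>R v0) t" if "t > 0" for t
      unfolding bregman_repr_def scale[OF that]
    proof (rule INF_greatest)
      fix v assume v: "v \<in> interior (edom (fconj H))"
      have "0 \<le> ereal t * bregman (fconj H) v0 v"
        using bregman_fconj_nonneg[OF H v v0'] that by simp
      moreover have "ereal (- j0) \<le> fconj J (grad (fconj H) v)"
        using fconj_ge_real[of J 0 j0, OF j0] by simp
      ultimately show "ereal (- j0) \<le> ereal t * bregman (fconj H) v0 v + fconj J (grad (fconj H) v)"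
        using add_mono by fastforce
    qed
    moreover have "ereal (t * (0 - e) + - j0) \<le> ereal (- j0)" if "t > 0" for t
      using \<open>e > 0\<close> that by simp
    ultimately show "\<exists>C. \<forall>t>0. ereal (t * (0 - e) + C) \<le> bregman_repr J H (t *\<^sub>R v0) t"
      by (meson order_trans)
  next
    have "bregman (fconj H) v0 v0 = 0"
      using fconj_edom_real[OF H(1) v0'] unfolding bregman_def by (cases "fconj H v0") auto
    then have "bregman_repr J H (t *\<^sub>R v0) t \<le> ereal (t * 0 + K)" if "t > 0" for t
      unfolding bregman_repr_def scale[OF that] K_def
      using INF_lower[OF v0, of "\<lambda>v. ereal t * bregman (fconj H) v0 v + fconj J (grad (fconj H) v)"]
        fconj_finite_if_one_coercive[OF J(1,2)] by simp
    then show "\<exists>C. \<forall>t>0. bregman_repr J H (t *\<^sub>R v0) t \<le> ereal (t * 0 + C)" by blast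
  qed
  then show ?thesis by (simp add: zero_ereal_def)
qed

theorem mainTheorem8:
  fixes J H :: "real ^ 'n \<Rightarrow> ereal" and v0 d :: "real ^ 'n"
  assumes A1: "J \<in> Gamma0" "H \<in> Gamma0" "one_coercive J" "legendre H"
    and v0: "v0 \<in> interior (edom (fconj H))"
    and d: "d \<in> edom J"
  shows "((\<lambda>t. hopf_lax J H (d + t *\<^sub>R v0) t / ereal t) \<longlongrightarrow> fconj H v0) at_top
         \<and> (0 \<in> edom J \<longrightarrow>
            ((\<lambda>t. bregman_repr J H (t *\<^sub>R v0) t / ereal t) \<longlongrightarrow> 0) at_top)"
proof (intro conjI impI)
  show "((\<lambda>t. hopf_lax J H (d + t *\<^sub>R v0) t / ereal t) \<longlongrightarrow> fconj H v0) at_top"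
    using hopf_lax_slope[OF A1(1,3,2) _ d] v0 interior_subset by blast
  assume "0 \<in> edom J"
  then show "((\<lambda>t. bregman_repr J H (t *\<^sub>R v0) t / ereal t) \<longlongrightarrow> 0) at_top"
    by (rule bregman_repr_slope[OF A1(1,3) _ A1(2,4) v0])
qed

end
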